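(* Consider the FedPBC algorithm described in the context with constant learning rate $\eta$ and $s\ge1$ local steps. Suppose Assumptions (A1), (A2) and (A4) hold, $L\ge1$, and $\eta\le\frac{1}{108L^2s^3(\beta^2+1)(1+\kappa^2L^2)}$. Then for every round $t$, $$\mathbb{E}\left[F(\bar x^{t+1})-F(\bar x^t)\mid\mathcal{F}^t\right]\le-\frac{\eta s}{3}\|\nabla F(\bar x^t)\|^2+\eta s\frac{L^2}{m}\sum_{i=1}^m\|x_i^t-\bar x^t\|^2+6\eta^2s^2L(\zeta^2+\sigma^2)(1+\kappa^2L^2).$$
   Context: Federated learning problem: $m$ clients minimize $F(x)=\frac1m\sum_{i=1}^m F_i(x)$ over $x\in\mathbb{R}^d$, where $F_i(x)=\mathbb{E}_{\xi\sim\mathcal{D}_i}[\ell_i(x;\xi)]$. FedPBC algorithm: fix $s\ge1$, learning rate $\eta>0$ and initial point $x^0$; every client starts with $x_i^0=x^0$. In each round $t$: every client $i$ sets $x_i^{(t,0)}=x_i^t$ and performs $x_i^{(t,k+1)}=x_i^{(t,k)}-\eta\nabla\ell_i(x_i^{(t,k)};\xi_i^t)$ for $k=0,\dots,s-1$ ($\xi_i^t$ a random sample drawn in round $t$), and sets $x_i^{t\star}=x_i^{(t,s)}$. A random set $\mathcal{A}^t\subseteq[m]$ of clients has active uplinks in round $t$ (client $i$ active with unknown, possibly time-varying probability $p_i^t\ge c>0$). If $\mathcal{A}^t\neq\emptyset$ the server sets $x^{t+1}=\frac{1}{|\mathcal{A}^t|}\sum_{i\in\mathcal{A}^t}x_i^{t\star}$,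 else $x^{t+1}=x^t$; clients $i\in\mathcal{A}^t$ set $x_i^{t+1}=x^{t+1}$, clients $i\notin\mathcal{A}^t$ set $x_i^{t+1}=x_i^{t\star}$. Let $\bar x^t=\frac1m\sum_i x_i^t$ and $\mathcal{F}^t$ the sigma-algebra generated by all randomness up to round $t$. $\kappa=\max_i\frac{(1+\eta L_i)^s-1-s\eta L_i}{\binom{s}{2}(\eta L_i)^2}$ for $s\ge2$, $\kappa=0$ for $s=1$. (A1) For each $i$ and every sample $\xi$, $x\mapsto\nabla\ell_i(x;\xi)$ is $L_i$-Lipschitz; $L:=\max_iL_i$. (A2) $\mathbb{E}[\nabla\ell_i(x_i^t;\xi_i^t)\mid\mathcal{F}^t]=\nabla F_i(x_i^t)$ and $\mathbb{E}[\|\nabla\ell_i(x;\xi_i^t)-\nabla F_i(x)\|^2\mid\mathcal{F}^t]\le\sigma^2$ for all $x,i$. (A4) For some $\beta,\zeta\ge0$ and all $x$: $\frac1m\sum_i\|\nabla F_i(x)-\nabla F(x)\|^2\le\beta^2\|\nabla F(x)\|^2+\zeta^2$. *)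

theory Defs
  imports "HOL-Probability.Probability"
begin

text \<open>Clients are indexed by \<open>{..<m}\<close>. Vectors live in a Euclidean space \<open>'a\<close> (i.e. R^d).\<close>

definition local_obj :: "(nat \<Rightarrow> 's measure) \<Rightarrow> (nat \<Rightarrow> 'a \<Rightarrow> 's \<Rightarrow> real) \<Rightarrow> nat \<Rightarrow> 'a \<Rightarrow> real" where
  "local_obj D l i x = (\<integral>\<xi>. l i x \<xi> \<partial>D i)"

definition global_obj :: "nat \<Rightarrow> (nat \<Rightarrow> 's measure) \<Rightarrow> (nat \<Rightarrow> 'a \<Rightarrow> 's \<Rightarrow> real) \<Rightarrow> 'a \<Rightarrow> real" where
  "global_obj m D l x = (1 / real m) * (\<Sum>i<m. local_obj D l i x)"

text \<open>Gradient of the global objective, from the gradients \<open>gF i x = \<nabla>F_i(x)\<close>.\<close>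
definition global_grad :: "nat \<Rightarrow> (nat \<Rightarrow> 'a \<Rightarrow> 'a::real_vector) \<Rightarrow> 'a \<Rightarrow> 'a" where
  "global_grad m gF x = (1 / real m) *\<^sub>R (\<Sum>i<m. gF i x)"

definition avg :: "nat \<Rightarrow> (nat \<Rightarrow> 'a::real_vector) \<Rightarrow> 'a" where
  "avg m x = (1 / real m) *\<^sub>R (\<Sum>i<m. x i)"

definition local_steps :: "(nat \<Rightarrow> 'a \<Rightarrow> 's \<Rightarrow> 'a::real_vector) \<Rightarrow> real \<Rightarrow> nat \<Rightarrow> 's \<Rightarrow> nat \<Rightarrow> 'a \<Rightarrow> 'a" where
  "local_steps gl \<eta> i \<xi> k x = ((\<lambda>y. y - \<eta> *\<^sub>R gl i y \<xi>) ^^ k) x"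

definition server_update :: "'a \<Rightarrow> nat set \<Rightarrow> (nat \<Rightarrow> 'a::real_vector) \<Rightarrow> 'a" where
  "server_update xsrv A xstar =
     (if A = {} then xsrv else (1 / real (card A)) *\<^sub>R (\<Sum>i\<in>A. xstar i))"

definition client_update :: "'a \<Rightarrow> nat set \<Rightarrow> (nat \<Rightarrow> 'a::real_vector) \<Rightarrow> nat \<Rightarrow> 'a" where
  "client_update xsrv A xstar i =
     (if i \<in> A then server_update xsrv A xstar else xstar i)"

definition kappa :: "nat \<Rightarrow> (nat \<Rightarrow> real) \<Rightarrow> real \<Rightarrow> nat \<Rightarrow> real" where
  "kappa m Li \<eta> s =
     (if s = 1 then 0
      else Max ((\<lambda>i. ((1 + \<eta> * Li i) ^ s - 1 - real s * \<eta> * Li i)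
                      / (real (s choose 2) * (\<eta> * Li i)\<^sup>2)) ` {..<m}))"

end

theory Submission
  imports Defs
begin

(*
  The server step replaces the models of the active clients by their average.  Each local result comes
  from s gradient steps on a single sample and differs from the one long step x_i - eta s g_i,
  where g_i is the sample gradient at x_i, by at most 2 eta^2 L s^2 |g_i|.  Lipschitz sample
  gradients make every F_i, hence F, L-smooth (the gradient of an expectation is the expectation
  of the gradient), so F (mean + h) - F mean <= grad F mean . h + L |h|^2.  Taking expectations
  with unbiasedness and the variance bound leaves - eta s <grad F mean, avg_i grad F_i (x_i)>
  plus second moments; replacing grad F_i (x_i) by grad F_i mean costs L |x_i - mean|, and (A4)
  controls the spread of the grad F_i mean.  The step-size condition forces eta L s <= 1/108,
  which absorbs all second-order terms; kappa only enters through the factor 1 + kappa^2 L^2 >= 1.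
*)

section \<open>Averages over the clients\<close>

lemma avg_cong: "m = m' \<Longrightarrow> (\<And>i. i < m' \<Longrightarrow> x i = y i) \<Longrightarrow> avg m x = avg m' y"
  by (simp add: avg_def)

lemma avg_diff: "avg m (\<lambda>i. x i - y i) = avg m x - avg m y"
  by (simp add: avg_def sum_subtractf scaleR_diff_right)

lemma avg_add: "avg m (\<lambda>i. x i + y i) = avg m x + avg m y"
  by (simp add: avg_def sum.distrib scaleR_add_right)

lemma avg_const: "0 < m \<Longrightarrow> avg m (\<lambda>i. c) = c"
  by (simp add: avg_def sum_constant_scaleR)

lemma avg_mult_left: "avg m (\<lambda>i. c * f i) = c * avg m (f :: nat \<Rightarrow> real)"
  by (simp add: avg_def sum_distrib_left)

lemma avg_divide: "avg m (\<lambda>i. f i / c) = avg m (f :: nat \<Rightarrow> real) / c"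
  by (simp add: avg_def sum_divide_distrib mult.commute)

lemma inner_avg_right: "g \<bullet> avg m x = avg m (\<lambda>i. g \<bullet> x i)"
  by (simp add: avg_def inner_sum_right)

lemma avg_mono:
  assumes "\<And>i. i < m \<Longrightarrow> f i \<le> g i"
  shows "avg m f \<le> avg m (g :: nat \<Rightarrow> real)"
proof -
  have "sum f {..<m} \<le> sum g {..<m}" using assms by (intro sum_mono) simp
  then show ?thesis by (simp add: avg_def divide_right_mono)
qed

lemma avg_nonneg:
  assumes "\<And>i. i < m \<Longrightarrow> 0 \<le> f i"
  shows "0 \<le> avg m (f :: nat \<Rightarrow> real)"
proof -
  have "0 \<le> sum f {..<m}" using assms by (intro sum_nonneg) simp
  then show ?thesis by (simp add: avg_def)
qed

lemma norm_avg_le: "norm (avg m x) \<le> avg m (\<lambda>i. norm (x i))"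
  by (simp add: avg_def norm_sum divide_right_mono)

lemma avg_square_le: "0 < m \<Longrightarrow> (avg m f)\<^sup>2 \<le> avg m (\<lambda>i. (f i :: real)\<^sup>2)"
  using sum_squared_le_sum_of_squares[of f "{..<m}"]
  by (simp add: avg_def power2_eq_square field_simps)

lemma avg_norm_sq_bias_variance:
  fixes v :: "nat \<Rightarrow> 'a::real_inner"
  assumes m: "0 < m"
  shows "avg m (\<lambda>i. (norm (v i))\<^sup>2) = (norm (avg m v))\<^sup>2 + avg m (\<lambda>i. (norm (v i - avg m v))\<^sup>2)"
proof -
  let ?g = "avg m v"
  have "(norm (v i - ?g))\<^sup>2 = (norm (v i))\<^sup>2 - 2 * (?g \<bullet> v i) + (norm ?g)\<^sup>2" for i
    by (simp add: power2_norm_eq_inner inner_diff_left inner_diff_right inner_commute)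
  then have "avg m (\<lambda>i. (norm (v i - ?g))\<^sup>2) = avg m (\<lambda>i. (norm (v i))\<^sup>2) - 2 * (?g \<bullet> ?g) + (norm ?g)\<^sup>2"
    by (simp add: avg_add avg_diff avg_mult_left avg_const m inner_avg_right)
  then show ?thesis
    by (simp add: power2_norm_eq_inner)
qed

lemma integral_avg:
  fixes X :: "nat \<Rightarrow> 'a \<Rightarrow> 'b::{banach, second_countable_topology}"
  assumes "\<And>i. i < m \<Longrightarrow> integrable M (X i)"
  shows "(\<integral>\<omega>. avg m (\<lambda>i. X i \<omega>) \<partial>M) = avg m (\<lambda>i. \<integral>\<omega>. X i \<omega> \<partial>M)"
  using assms by (simp add: avg_def Bochner_Integration.integral_sum)

lemma integrable_avg:
  fixes X :: "nat \<Rightarrow> 'a \<Rightarrow> 'b::{banach, second_countable_topology}"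
  assumes "\<And>i. i < m \<Longrightarrow> integrable M (X i)"
  shows "integrable M (\<lambda>\<omega>. avg m (\<lambda>i. X i \<omega>))"
  unfolding avg_def using assms by (intro integrable_scaleR_right Bochner_Integration.integrable_sum) auto

lemma avg_client_update:
  assumes "A \<subseteq> {..<m}"
  shows "avg m (client_update xsrv A x) = avg m x"
proof (cases "A = {}")
  case False
  have "finite A" using assms finite_subset by blast
  with False have "(\<Sum>i\<in>A. server_update xsrv A x) = (\<Sum>i\<in>A. x i)"
    by (simp add: server_update_def sum_constant_scaleR)
  then have "(\<Sum>i<m. client_update xsrv A x i) = (\<Sum>i\<in>A. x i) + (\<Sum>i\<in>{..<m} - A. x i)"
    using sum.If_cases[of "{..<m}" "\<lambda>i. i \<in> A" "\<lambda>i. server_update xsrv A x" x] assms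
    by (simp add: client_update_def Int_absorb1 Diff_eq[symmetric])
  also have "\<dots> = (\<Sum>i<m. x i)"
    using sum.subset_diff[of A "{..<m}" x] assms by (simp add: add.commute)
  finally show ?thesis by (simp add: avg_def)
qed (simp add: avg_def client_update_def)

section \<open>Smoothness of expected losses\<close>

lemma lipschitz_gradient_taylor_bound:
  fixes f :: "'a::real_inner \<Rightarrow> real"
  assumes der: "\<And>v. (f has_derivative (\<lambda>h. g v \<bullet> h)) (at v)"
    and lip: "\<And>v w. norm (g v - g w) \<le> K * norm (v - w)"
  shows "\<bar>f (y + h) - f y - g y \<bullet> h\<bar> \<le> K * (norm h)\<^sup>2"
proof (cases "h = 0")
  case False
  have K: "0 \<le> K"
  proof -
    have "norm (g (y + h) - g y) \<le> K * norm h" using lip[of "y + h" y] by simp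
    then have "0 \<le> K * norm h" by (rule order_trans[OF norm_ge_zero])
    then show ?thesis using False by (simp add: zero_le_mult_iff)
  qed
  have "norm (f (y + h) - f y - g y \<bullet> (y + h - y)) \<le> norm (y + h - y) * (K * norm h)"
  proof (rule differentiable_bound_linearization[where S = "closed_segment y (y + h)" and f' = "\<lambda>v h. g v \<bullet> h"])
    show "y + t *\<^sub>R (y + h - y) \<in> closed_segment y (y + h)" if "t \<in> {0..1}" for t
      using that by (auto simp: in_segment algebra_simps)
    show "(f has_derivative (\<lambda>h. g v \<bullet> h)) (at v within closed_segment y (y + h))" for v
      using der has_derivative_at_withinI by blast
    show "onorm ((\<lambda>h. g v \<bullet> h) - (\<lambda>h. g y \<bullet> h)) \<le> K * norm h"
      if "v \<in> closed_segment y (y + h)" for v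
    proof -
      have "onorm ((\<lambda>h. g v \<bullet> h) - (\<lambda>h. g y \<bullet> h)) \<le> norm (g v - g y)"
        by (rule onorm_bound) (simp_all add: fun_diff_def inner_diff_left[symmetric] Cauchy_Schwarz_ineq2)
      also have "\<dots> \<le> K * norm (v - y)" by (rule lip)
      also have "\<dots> \<le> K * norm h"
        using segment_bound1[OF that] K by (simp add: mult_left_mono)
      finally show ?thesis .
    qed
  qed auto
  then show ?thesis by (simp add: power2_eq_square mult_ac)
qed simp

lemma has_derivative_of_quadratic_remainder:
  fixes f :: "'a::real_normed_vector \<Rightarrow> 'b::real_normed_vector"
  assumes "bounded_linear D" and rem: "\<And>h. norm (f (y + h) - f y - D h) \<le> K * (norm h)\<^sup>2"
  shows "(f has_derivative D) (at y)"
  unfolding has_derivative_at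
proof
  show "(\<lambda>h. norm (f (y + h) - f y - D h) / norm h) \<midarrow>0\<rightarrow> 0"
  proof (rule Lim_null_comparison)
    show "\<forall>\<^sub>F h in at 0. norm (norm (f (y + h) - f y - D h) / norm h) \<le> K * norm h"
      using rem by (intro always_eventually allI) (simp add: divide_le_eq power2_eq_square mult_ac)
    show "(\<lambda>h. K * norm h) \<midarrow>0\<rightarrow> 0"
      by (auto intro!: tendsto_eq_intros)
  qed
qed fact

lemma borel_measurable_inner_gradient:
  fixes lf :: "'a::real_inner \<Rightarrow> 's \<Rightarrow> real"
  assumes meas: "\<And>y. lf y \<in> borel_measurable N"
    and rem: "\<And>y h z. \<bar>lf (y + h) z - lf y z - glf y z \<bullet> h\<bar> \<le> K * (norm h)\<^sup>2"
  shows "(\<lambda>z. glf y z \<bullet> h) \<in> borel_measurable N"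
proof (rule borel_measurable_LIMSEQ_real)
  define q where "q n z = real (Suc n) * (lf (y + (1 / real (Suc n)) *\<^sub>R h) z - lf y z)" for n z
  show "q n \<in> borel_measurable N" for n
    unfolding q_def using meas by measurable
  show "(\<lambda>n. q n z) \<longlonglongrightarrow> glf y z \<bullet> h" for z
  proof (rule Lim_transform)
    show "(\<lambda>n. glf y z \<bullet> h) \<longlonglongrightarrow> glf y z \<bullet> h" by simp
    show "(\<lambda>n. q n z - glf y z \<bullet> h) \<longlonglongrightarrow> 0"
    proof (rule Lim_null_comparison)
      show "\<forall>\<^sub>F n in sequentially. norm (q n z - glf y z \<bullet> h) \<le> K * (norm h)\<^sup>2 / real (Suc n)"
      proof (intro always_eventually allI)
        fix n
        let ?t = "1 / real (Suc n)"
        let ?r = "lf (y + ?t *\<^sub>R h) z - lf y z - glf y z \<bullet> (?t *\<^sub>R h)"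
        have "q n z - glf y z \<bullet> h = real (Suc n) * ?r"
          by (simp add: q_def algebra_simps) (simp add: field_simps)
        then have "norm (q n z - glf y z \<bullet> h) = real (Suc n) * \<bar>?r\<bar>"
          by (simp add: abs_mult)
        also have "\<dots> \<le> real (Suc n) * (K * (norm (?t *\<^sub>R h))\<^sup>2)"
          by (rule mult_left_mono[OF rem]) simp
        also have "\<dots> = K * (norm h)\<^sup>2 / real (Suc n)"
          by (simp add: power2_eq_square field_simps del: of_nat_Suc)
        finally show "norm (q n z - glf y z \<bullet> h) \<le> K * (norm h)\<^sup>2 / real (Suc n)" .
      qed
      show "(\<lambda>n. K * (norm h)\<^sup>2 / real (Suc n)) \<longlonglongrightarrow> 0"
        by (intro tendsto_divide_0[OF tendsto_const] filterlim_real_sequentially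
            filterlim_compose[OF _ filterlim_Suc] filterlim_at_top_imp_at_infinity)
    qed
  qed
qed

lemma (in finite_measure) integrable_gradient:
  fixes lf :: "'b::euclidean_space \<Rightarrow> 'a \<Rightarrow> real"
  assumes int: "\<And>y. integrable M (lf y)"
    and rem: "\<And>y h z. \<bar>lf (y + h) z - lf y z - glf y z \<bullet> h\<bar> \<le> K * (norm h)\<^sup>2"
  shows "integrable M (glf y)"
proof -
  have "integrable M (\<lambda>z. glf y z \<bullet> h)" for h
  proof (rule Bochner_Integration.integrable_bound)
    show "integrable M (\<lambda>z. \<bar>lf (y + h) z - lf y z\<bar> + K * (norm h)\<^sup>2)"
      using int by auto
    show "(\<lambda>z. glf y z \<bullet> h) \<in> borel_measurable M"
      using int rem by (intro borel_measurable_inner_gradient) auto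
    show "AE z in M. norm (glf y z \<bullet> h) \<le> norm (\<bar>lf (y + h) z - lf y z\<bar> + K * (norm h)\<^sup>2)"
    proof (rule AE_I2)
      show "norm (glf y z \<bullet> h) \<le> norm (\<bar>lf (y + h) z - lf y z\<bar> + K * (norm h)\<^sup>2)" for z
        using rem[of y h z] unfolding real_norm_def by arith
    qed
  qed
  then have "integrable M (\<lambda>z. \<Sum>b\<in>Basis. (glf y z \<bullet> b) *\<^sub>R b)"
    by (intro Bochner_Integration.integrable_sum integrable_scaleR_left)
  then show ?thesis by (simp add: euclidean_representation)
qed

lemma (in prob_space) gradient_of_expectation:
  fixes lf :: "'b::euclidean_space \<Rightarrow> 'a \<Rightarrow> real"
  assumes int: "\<And>y. integrable M (lf y)"
    and rem: "\<And>y h z. \<bar>lf (y + h) z - lf y z - glf y z \<bullet> h\<bar> \<le> K * (norm h)\<^sup>2"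
    and der: "((\<lambda>y. expectation (lf y)) has_derivative (\<lambda>h. Fg \<bullet> h)) (at y)"
  shows "Fg = expectation (glf y)"
proof -
  have glf: "integrable M (glf y)"
    using int rem by (rule integrable_gradient)
  have "\<bar>expectation (lf (y + h)) - expectation (lf y) - expectation (glf y) \<bullet> h\<bar> \<le> K * (norm h)\<^sup>2" for h
  proof -
    have "expectation (lf (y + h)) - expectation (lf y) - expectation (glf y) \<bullet> h
        = expectation (\<lambda>z. lf (y + h) z - lf y z - glf y z \<bullet> h)"
      using int glf by simp
    also have "\<bar>\<dots>\<bar> \<le> expectation (\<lambda>z. K * (norm h)\<^sup>2)"
      using int glf rem by (intro integral_abs_bound[THEN order_trans] integral_mono) auto
    finally show ?thesis by (simp add: prob_space)
  qed
  then have "((\<lambda>y. expectation (lf y)) has_derivative (\<lambda>h. expectation (glf y) \<bullet> h)) (at y)"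
    by (intro has_derivative_of_quadratic_remainder bounded_linear_inner_right) simp
  with der have "(\<lambda>h. Fg \<bullet> h) = (\<lambda>h. expectation (glf y) \<bullet> h)"
    by (rule has_derivative_unique)
  then show ?thesis
    by (metis euclidean_eqI)
qed

lemma (in prob_space) lipschitz_gradient_of_expectation:
  fixes lf :: "'b::euclidean_space \<Rightarrow> 'a \<Rightarrow> real"
  assumes int: "\<And>y. integrable M (lf y)"
    and der: "\<And>z y. ((\<lambda>v. lf v z) has_derivative (\<lambda>h. glf y z \<bullet> h)) (at y)"
    and lip: "\<And>z y y'. norm (glf y z - glf y' z) \<le> K * norm (y - y')"
    and Fder: "\<And>y. ((\<lambda>y. expectation (lf y)) has_derivative (\<lambda>h. Fg y \<bullet> h)) (at y)"
  shows "norm (Fg y - Fg y') \<le> K * norm (y - y')"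
proof -
  have rem: "\<bar>lf (y + h) z - lf y z - glf y z \<bullet> h\<bar> \<le> K * (norm h)\<^sup>2" for y h z
    using der lip by (rule lipschitz_gradient_taylor_bound)
  have "\<And>y. Fg y = expectation (glf y)"
    using int rem Fder by (rule gradient_of_expectation)
  moreover have glf: "\<And>y. integrable M (glf y)"
    using int rem by (rule integrable_gradient)
  ultimately have "norm (Fg y - Fg y') = norm (expectation (\<lambda>z. glf y z - glf y' z))"
    by simp
  also have "\<dots> \<le> expectation (\<lambda>z. K * norm (y - y'))"
    using glf lip by (intro integral_norm_bound[THEN order_trans] integral_mono) auto
  finally show ?thesis by (simp add: prob_space)
qed

lemma lipschitz_gradient_local_obj:
  fixes l :: "nat \<Rightarrow> 'a::euclidean_space \<Rightarrow> 's \<Rightarrow> real"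
  assumes "prob_space (D i)" and "\<And>y. integrable (D i) (l i y)"
    and "\<And>z y. ((\<lambda>v. l i v z) has_derivative (\<lambda>h. gl i y z \<bullet> h)) (at y)"
    and "\<And>z y y'. norm (gl i y z - gl i y' z) \<le> K * norm (y - y')"
    and "\<And>y. (local_obj D l i has_derivative (\<lambda>h. gF i y \<bullet> h)) (at y)"
  shows "norm (gF i y - gF i y') \<le> K * norm (y - y')"
  using prob_space.lipschitz_gradient_of_expectation[OF assms(1-4)] assms(5)
  by (simp add: local_obj_def[abs_def])

lemma global_obj_eq_avg: "global_obj m D l y = avg m (\<lambda>i. local_obj D l i y)"
  by (simp add: global_obj_def avg_def)

lemma global_grad_eq_avg: "global_grad m gF y = avg m (\<lambda>i. gF i y)"
  by (simp add: global_grad_def avg_def)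

lemma has_derivative_global_obj:
  assumes "\<And>i. i < m \<Longrightarrow> (local_obj D l i has_derivative (\<lambda>h. gF i y \<bullet> h)) (at y)"
  shows "(global_obj m D l has_derivative (\<lambda>h. global_grad m gF y \<bullet> h)) (at y)"
proof -
  have "((\<lambda>v. avg m (\<lambda>i. local_obj D l i v)) has_derivative (\<lambda>h. avg m (\<lambda>i. gF i y \<bullet> h))) (at y)"
    unfolding avg_def using assms by (intro has_derivative_scaleR_right has_derivative_sum) auto
  then show ?thesis
    by (simp add: global_obj_eq_avg[abs_def] global_grad_eq_avg inner_avg_right inner_commute)
qed

lemma global_obj_taylor_bound:
  assumes m: "0 < m"
    and der: "\<And>i y. i < m \<Longrightarrow> (local_obj D l i has_derivative (\<lambda>h. gF i y \<bullet> h)) (at y)"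
    and lip: "\<And>i y y'. i < m \<Longrightarrow> norm (gF i y - gF i y') \<le> K * norm (y - y')"
  shows "\<bar>global_obj m D l (y + h) - global_obj m D l y - global_grad m gF y \<bullet> h\<bar> \<le> K * (norm h)\<^sup>2"
proof -
  have "global_obj m D l (y + h) - global_obj m D l y - global_grad m gF y \<bullet> h
      = avg m (\<lambda>i. local_obj D l i (y + h) - local_obj D l i y - gF i y \<bullet> h)"
    by (simp add: global_obj_eq_avg global_grad_eq_avg avg_diff inner_commute inner_avg_right)
  also have "\<bar>\<dots>\<bar> \<le> avg m (\<lambda>i. \<bar>local_obj D l i (y + h) - local_obj D l i y - gF i y \<bullet> h\<bar>)"
    using norm_avg_le[of m "\<lambda>i. local_obj D l i (y + h) - local_obj D l i y - gF i y \<bullet> h"] by simp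
  also have "\<dots> \<le> avg m (\<lambda>i. K * (norm h)\<^sup>2)"
    using der lip by (intro avg_mono lipschitz_gradient_taylor_bound) auto
  finally show ?thesis
    using m by (simp add: avg_const)
qed

section \<open>Local gradient steps\<close>

lemma gradient_step_drift:
  fixes G :: "'a::real_normed_vector \<Rightarrow> 'a"
  assumes lip: "\<And>v w. norm (G v - G w) \<le> K * norm (v - w)"
    and K: "0 \<le> K" and \<eta>: "0 \<le> \<eta>" and small: "2 * \<eta> * K * real k \<le> 1"
    and drift: "norm (y - x) \<le> 2 * \<eta> * real k * norm (G x)"
  shows "norm (y - \<eta> *\<^sub>R G y - x) \<le> 2 * \<eta> * real (Suc k) * norm (G x)"
proof -
  have "norm (G y - G x) \<le> K * (2 * \<eta> * real k * norm (G x))"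
    using lip[of y x] mult_left_mono[OF drift K] by linarith
  then have "\<eta> * norm (G y - G x) \<le> \<eta> * (K * (2 * \<eta> * real k * norm (G x)))"
    using \<eta> by (rule mult_left_mono)
  also have "\<dots> = (2 * \<eta> * K * real k) * (\<eta> * norm (G x))"
    by (simp add: algebra_simps)
  also have "\<dots> \<le> \<eta> * norm (G x)"
    using mult_right_mono[OF small, of "\<eta> * norm (G x)"] \<eta> by simp
  finally have G_diff: "\<eta> * norm (G y - G x) \<le> \<eta> * norm (G x)" .
  have eq: "y - \<eta> *\<^sub>R G y - x = (y - x) - (\<eta> *\<^sub>R G x + \<eta> *\<^sub>R (G y - G x))"
    by (simp add: algebra_simps)
  have "norm (y - \<eta> *\<^sub>R G y - x) \<le> norm (y - x) + (norm (\<eta> *\<^sub>R G x) + norm (\<eta> *\<^sub>R (G y - G x)))"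
    unfolding eq by (rule order_trans[OF norm_triangle_ineq4 add_left_mono[OF norm_triangle_ineq]])
  also have "\<dots> = norm (y - x) + \<eta> * norm (G x) + \<eta> * norm (G y - G x)"
    using \<eta> by simp
  also have "\<dots> \<le> 2 * \<eta> * real (Suc k) * norm (G x)"
    using drift G_diff by (simp add: algebra_simps)
  finally show ?thesis .
qed

lemma gradient_step_linearization:
  fixes G :: "'a::real_normed_vector \<Rightarrow> 'a"
  assumes lip: "\<And>v w. norm (G v - G w) \<le> K * norm (v - w)"
    and K: "0 \<le> K" and \<eta>: "0 \<le> \<eta>"
    and drift: "norm (y - x) \<le> 2 * \<eta> * real k * norm (G x)"
    and lin: "norm (y - (x - (\<eta> * real k) *\<^sub>R G x)) \<le> 2 * \<eta>\<^sup>2 * K * (real k)\<^sup>2 * norm (G x)"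
  shows "norm (y - \<eta> *\<^sub>R G y - (x - (\<eta> * real (Suc k)) *\<^sub>R G x))
    \<le> 2 * \<eta>\<^sup>2 * K * (real (Suc k))\<^sup>2 * norm (G x)"
proof -
  have "norm (G y - G x) \<le> K * (2 * \<eta> * real k * norm (G x))"
    using lip[of y x] mult_left_mono[OF drift K] by linarith
  then have G_diff: "\<eta> * norm (G y - G x) \<le> \<eta> * (K * (2 * \<eta> * real k * norm (G x)))"
    using \<eta> by (rule mult_left_mono)
  have eq: "y - \<eta> *\<^sub>R G y - (x - (\<eta> * real (Suc k)) *\<^sub>R G x)
      = (y - (x - (\<eta> * real k) *\<^sub>R G x)) - \<eta> *\<^sub>R (G y - G x)"
    by (simp add: algebra_simps)
  have "norm (y - \<eta> *\<^sub>R G y - (x - (\<eta> * real (Suc k)) *\<^sub>R G x))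
      \<le> norm (y - (x - (\<eta> * real k) *\<^sub>R G x)) + \<eta> * norm (G y - G x)"
    unfolding eq by (rule order_trans[OF norm_triangle_ineq4]) (simp add: \<eta>)
  also have "\<dots> \<le> 2 * \<eta>\<^sup>2 * K * (real k)\<^sup>2 * norm (G x) + \<eta> * (K * (2 * \<eta> * real k * norm (G x)))"
    using lin G_diff by (rule add_mono)
  also have "\<dots> = (2 * \<eta>\<^sup>2 * K * norm (G x)) * ((real k)\<^sup>2 + real k)"
    by (simp add: power2_eq_square algebra_simps)
  also have "\<dots> \<le> (2 * \<eta>\<^sup>2 * K * norm (G x)) * (real (Suc k))\<^sup>2"
    using K by (intro mult_left_mono) (simp_all add: power2_eq_square algebra_simps \<eta>)
  finally show ?thesis
    by (simp add: mult_ac)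
qed

lemma gradient_steps_bounds:
  fixes G :: "'a::real_normed_vector \<Rightarrow> 'a"
  assumes lip: "\<And>v w. norm (G v - G w) \<le> K * norm (v - w)"
    and K: "0 \<le> K" and \<eta>: "0 \<le> \<eta>" and small: "2 * \<eta> * K * real k \<le> 1"
  shows "norm (((\<lambda>y. y - \<eta> *\<^sub>R G y) ^^ k) x - x) \<le> 2 * \<eta> * real k * norm (G x)
    \<and> norm (((\<lambda>y. y - \<eta> *\<^sub>R G y) ^^ k) x - (x - (\<eta> * real k) *\<^sub>R G x))
        \<le> 2 * \<eta>\<^sup>2 * K * (real k)\<^sup>2 * norm (G x)"
  using small
proof (induction k)
  case (Suc k)
  have small_k: "2 * \<eta> * K * real k \<le> 1"
    using Suc.prems mult_left_mono[of "real k" "real (Suc k)" "2 * \<eta> * K"] K \<eta> by simp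
  with Suc.IH gradient_step_drift[OF lip K \<eta> small_k] gradient_step_linearization[OF lip K \<eta>]
  show ?case
    by simp
qed simp

lemma measurable_sample_gradient:
  assumes \<xi>: "\<xi> \<in> M \<rightarrow>\<^sub>M S"
    and G: "(\<lambda>p. G (fst p) (snd p)) \<in> borel_measurable (borel \<Otimes>\<^sub>M S)"
    and y: "y \<in> borel_measurable M"
  shows "(\<lambda>\<omega>. G (y \<omega>) (\<xi> \<omega>)) \<in> borel_measurable M"
proof -
  have "(\<lambda>\<omega>. (y \<omega>, \<xi> \<omega>)) \<in> M \<rightarrow>\<^sub>M borel \<Otimes>\<^sub>M S"
    using \<xi> y by (intro measurable_Pair) auto
  from measurable_compose[OF this G] show ?thesis
    by simp
qed

lemma measurable_local_steps:
  fixes gl :: "nat \<Rightarrow> 'a::{real_normed_vector, second_countable_topology} \<Rightarrow> 's \<Rightarrow> 'a"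
  assumes \<xi>: "\<xi> \<in> M \<rightarrow>\<^sub>M S"
    and gl: "(\<lambda>p. gl i (fst p) (snd p)) \<in> borel_measurable (borel \<Otimes>\<^sub>M S)"
  shows "(\<lambda>\<omega>. local_steps gl \<eta> i (\<xi> \<omega>) k y) \<in> borel_measurable M"
  unfolding local_steps_def
proof (induction k)
  case (Suc k)
  let ?y = "\<lambda>\<omega>. ((\<lambda>y. y - \<eta> *\<^sub>R gl i y (\<xi> \<omega>)) ^^ k) y"
  have "(\<lambda>\<omega>. gl i (?y \<omega>) (\<xi> \<omega>)) \<in> borel_measurable M"
    using \<xi> gl Suc.IH by (rule measurable_sample_gradient[where G = "gl i"])
  with Suc.IH show ?case
    by simp
qed simp

section \<open>One round in expectation\<close>

lemma norm_avg_local_update_sq_le: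
  fixes x x' a :: "nat \<Rightarrow> 'a::real_normed_vector"
  assumes m: "0 < m" and \<tau>: "0 \<le> \<tau>"
    and near: "\<And>i. i < m \<Longrightarrow> norm (x' i - (x i - \<tau> *\<^sub>R a i)) \<le> c * norm (a i)"
  shows "(norm (avg m x' - avg m x))\<^sup>2 \<le> (\<tau> + c)\<^sup>2 * avg m (\<lambda>i. (norm (a i))\<^sup>2)"
proof -
  have "norm (x' i - x i) \<le> (\<tau> + c) * norm (a i)" if "i < m" for i
  proof -
    have "norm (x' i - x i) \<le> norm (x' i - (x i - \<tau> *\<^sub>R a i)) + norm (\<tau> *\<^sub>R a i)"
      using norm_triangle_ineq4[of "x' i - (x i - \<tau> *\<^sub>R a i)" "\<tau> *\<^sub>R a i"] by simp
    then show ?thesis using near[OF that] \<tau> by (simp add: algebra_simps)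
  qed
  then have "avg m (\<lambda>i. norm (x' i - x i)) \<le> avg m (\<lambda>i. (\<tau> + c) * norm (a i))"
    by (rule avg_mono)
  with norm_avg_le[of m "\<lambda>i. x' i - x i"]
  have "norm (avg m x' - avg m x) \<le> (\<tau> + c) * avg m (\<lambda>i. norm (a i))"
    by (simp add: avg_diff avg_mult_left)
  then have "(norm (avg m x' - avg m x))\<^sup>2 \<le> (\<tau> + c)\<^sup>2 * (avg m (\<lambda>i. norm (a i)))\<^sup>2"
    by (metis norm_ge_zero power_mono power_mult_distrib)
  also have "\<dots> \<le> (\<tau> + c)\<^sup>2 * avg m (\<lambda>i. (norm (a i))\<^sup>2)"
    using m by (intro mult_left_mono avg_square_le) auto
  finally show ?thesis .
qed

lemma avg_local_update_descent:
  fixes f :: "'a::real_inner \<Rightarrow> real" and x x' a :: "nat \<Rightarrow> 'a"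
  assumes m: "0 < m" and L: "0 \<le> L" and \<tau>: "0 \<le> \<tau>" and c: "0 \<le> c"
    and rem: "\<And>h. \<bar>f (avg m x + h) - f (avg m x) - g \<bullet> h\<bar> \<le> L * (norm h)\<^sup>2"
    and near: "\<And>i. i < m \<Longrightarrow> norm (x' i - (x i - \<tau> *\<^sub>R a i)) \<le> c * norm (a i)"
  shows "f (avg m x') - f (avg m x)
    \<le> c / 2 * (norm g)\<^sup>2 + avg m (\<lambda>i. - \<tau> * (g \<bullet> a i) + (c / 2 + L * (\<tau> + c)\<^sup>2) * (norm (a i))\<^sup>2)"
proof -
  define h where "h = avg m x' - avg m x"
  have step: "g \<bullet> (x' i - x i) \<le> c / 2 * (norm g)\<^sup>2 + (- \<tau> * (g \<bullet> a i) + c / 2 * (norm (a i))\<^sup>2)"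
    if "i < m" for i
  proof -
    have "g \<bullet> (x' i - x i) = - \<tau> * (g \<bullet> a i) + g \<bullet> (x' i - (x i - \<tau> *\<^sub>R a i))"
      by (simp add: algebra_simps)
    also have "g \<bullet> (x' i - (x i - \<tau> *\<^sub>R a i)) \<le> norm g * norm (x' i - (x i - \<tau> *\<^sub>R a i))"
      by (rule norm_cauchy_schwarz)
    also have "\<dots> \<le> norm g * (c * norm (a i))"
      using near[OF that] by (rule mult_left_mono) simp
    also have "\<dots> = c * (norm g * norm (a i))"
      by simp
    also have "c * (norm g * norm (a i)) \<le> c / 2 * ((norm g)\<^sup>2 + (norm (a i))\<^sup>2)"
      using mult_left_mono[OF sum_squares_bound[of "norm g" "norm (a i)"] c] by simp
    finally show ?thesis by (simp add: algebra_simps)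
  qed
  have "g \<bullet> h = avg m (\<lambda>i. g \<bullet> (x' i - x i))"
    unfolding h_def avg_diff[symmetric] by (rule inner_avg_right)
  also have "\<dots> \<le> avg m (\<lambda>i. c / 2 * (norm g)\<^sup>2 + (- \<tau> * (g \<bullet> a i) + c / 2 * (norm (a i))\<^sup>2))"
    using step by (rule avg_mono)
  finally have inner: "g \<bullet> h \<le> c / 2 * (norm g)\<^sup>2 + avg m (\<lambda>i. - \<tau> * (g \<bullet> a i) + c / 2 * (norm (a i))\<^sup>2)"
    by (simp add: avg_add avg_const m)
  have sq: "L * (norm h)\<^sup>2 \<le> L * ((\<tau> + c)\<^sup>2 * avg m (\<lambda>i. (norm (a i))\<^sup>2))"
    unfolding h_def using norm_avg_local_update_sq_le[OF m \<tau> near] L by (rule mult_left_mono)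
  have "f (avg m x') - f (avg m x) \<le> g \<bullet> h + L * (norm h)\<^sup>2"
    using rem[of h] by (simp add: h_def)
  also have "\<dots> \<le> c / 2 * (norm g)\<^sup>2 + avg m (\<lambda>i. - \<tau> * (g \<bullet> a i) + c / 2 * (norm (a i))\<^sup>2)
      + L * ((\<tau> + c)\<^sup>2 * avg m (\<lambda>i. (norm (a i))\<^sup>2))"
    using inner sq by (rule add_mono)
  also have "\<dots> = c / 2 * (norm g)\<^sup>2
      + avg m (\<lambda>i. - \<tau> * (g \<bullet> a i) + c / 2 * (norm (a i))\<^sup>2 + L * ((\<tau> + c)\<^sup>2 * (norm (a i))\<^sup>2))"
    by (simp add: avg_add avg_mult_left)
  finally show ?thesis
    by (simp add: algebra_simps)
qed

lemma avg_local_update_abs_bound: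
  fixes f :: "'a::real_inner \<Rightarrow> real" and x x' a :: "nat \<Rightarrow> 'a"
  assumes m: "0 < m" and L: "0 \<le> L" and \<tau>: "0 \<le> \<tau>"
    and rem: "\<And>h. \<bar>f (avg m x + h) - f (avg m x) - g \<bullet> h\<bar> \<le> L * (norm h)\<^sup>2"
    and near: "\<And>i. i < m \<Longrightarrow> norm (x' i - (x i - \<tau> *\<^sub>R a i)) \<le> c * norm (a i)"
  shows "\<bar>f (avg m x') - f (avg m x)\<bar>
    \<le> (norm g)\<^sup>2 / 2 + (1 / 2 + L) * (\<tau> + c)\<^sup>2 * avg m (\<lambda>i. (norm (a i))\<^sup>2)"
proof -
  define h where "h = avg m x' - avg m x"
  have "\<bar>f (avg m x') - f (avg m x)\<bar> \<le> \<bar>g \<bullet> h\<bar> + L * (norm h)\<^sup>2"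
    using rem[of h] by (simp add: h_def)
  moreover have "\<bar>g \<bullet> h\<bar> \<le> ((norm g)\<^sup>2 + (norm h)\<^sup>2) / 2"
    using Cauchy_Schwarz_ineq2[of g h] sum_squares_bound[of "norm g" "norm h"] by simp
  ultimately have "\<bar>f (avg m x') - f (avg m x)\<bar> \<le> (norm g)\<^sup>2 / 2 + (1 / 2 + L) * (norm h)\<^sup>2"
    by (simp add: algebra_simps)
  also have "\<dots> \<le> (norm g)\<^sup>2 / 2 + (1 / 2 + L) * ((\<tau> + c)\<^sup>2 * avg m (\<lambda>i. (norm (a i))\<^sup>2))"
    using norm_avg_local_update_sq_le[OF m \<tau> near] L unfolding h_def
    by (intro add_left_mono mult_left_mono) auto
  finally show ?thesis by (simp add: mult.assoc)
qed

lemma (in prob_space) square_integrable_of_variance_bound: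
  fixes a :: "'a \<Rightarrow> 'b::{real_inner, banach, second_countable_topology}"
  assumes a [measurable]: "a \<in> borel_measurable M"
    and var: "(\<integral>\<^sup>+\<omega>. ennreal ((norm (a \<omega> - \<mu>))\<^sup>2) \<partial>M) \<le> ennreal (\<sigma>\<^sup>2)"
  shows "integrable M (\<lambda>\<omega>. (norm (a \<omega> - \<mu>))\<^sup>2)"
    and "integrable M (\<lambda>\<omega>. (norm (a \<omega>))\<^sup>2)"
    and "integrable M a"
proof -
  show var_int: "integrable M (\<lambda>\<omega>. (norm (a \<omega> - \<mu>))\<^sup>2)"
    using var by (simp add: integrable_iff_bounded le_less_trans[OF _ ennreal_less_top])
  show sq_int: "integrable M (\<lambda>\<omega>. (norm (a \<omega>))\<^sup>2)"
  proof (rule Bochner_Integration.integrable_bound)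
    show "integrable M (\<lambda>\<omega>. 2 * (norm (a \<omega> - \<mu>))\<^sup>2 + 2 * (norm \<mu>)\<^sup>2)"
      using var_int by simp
    show "AE \<omega> in M. norm ((norm (a \<omega>))\<^sup>2) \<le> norm (2 * (norm (a \<omega> - \<mu>))\<^sup>2 + 2 * (norm \<mu>)\<^sup>2)"
    proof (rule AE_I2)
      fix \<omega>
      have "norm (a \<omega>) \<le> norm (a \<omega> - \<mu>) + norm \<mu>"
        using norm_triangle_ineq[of "a \<omega> - \<mu>" \<mu>] by simp
      then have "(norm (a \<omega>))\<^sup>2 \<le> (norm (a \<omega> - \<mu>) + norm \<mu>)\<^sup>2"
        by (rule power_mono) simp
      also have "\<dots> \<le> 2 * (norm (a \<omega> - \<mu>))\<^sup>2 + 2 * (norm \<mu>)\<^sup>2"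
        using sum_squares_bound[of "norm (a \<omega> - \<mu>)" "norm \<mu>"] by (simp add: power2_sum)
      finally show "norm ((norm (a \<omega>))\<^sup>2) \<le> norm (2 * (norm (a \<omega> - \<mu>))\<^sup>2 + 2 * (norm \<mu>)\<^sup>2)"
        by simp
    qed
  qed simp
  have "integrable M (\<lambda>\<omega>. norm (a \<omega>))"
    using sq_int by (rule square_integrable_imp_integrable[rotated]) simp
  then show "integrable M a"
    by (simp add: integrable_norm_iff)
qed

lemma (in prob_space) second_moment_le_of_variance_bound:
  fixes a :: "'a \<Rightarrow> 'b::{real_inner, banach, second_countable_topology}"
  assumes a: "a \<in> borel_measurable M"
    and var: "(\<integral>\<^sup>+\<omega>. ennreal ((norm (a \<omega> - \<mu>))\<^sup>2) \<partial>M) \<le> ennreal (\<sigma>\<^sup>2)"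
    and mean: "expectation a = \<mu>"
  shows "expectation (\<lambda>\<omega>. (norm (a \<omega>))\<^sup>2) \<le> (norm \<mu>)\<^sup>2 + \<sigma>\<^sup>2"
proof -
  note ints = square_integrable_of_variance_bound[OF a var]
  have "(norm (a \<omega>))\<^sup>2 = (norm (a \<omega> - \<mu>))\<^sup>2 + 2 * (\<mu> \<bullet> a \<omega>) - (norm \<mu>)\<^sup>2" for \<omega>
    by (simp add: power2_norm_eq_inner inner_diff_left inner_diff_right inner_commute)
  then have "expectation (\<lambda>\<omega>. (norm (a \<omega>))\<^sup>2)
      = expectation (\<lambda>\<omega>. (norm (a \<omega> - \<mu>))\<^sup>2) + 2 * (\<mu> \<bullet> expectation a) - (norm \<mu>)\<^sup>2"
    using ints by (simp add: prob_space)
  also have "\<dots> = expectation (\<lambda>\<omega>. (norm (a \<omega> - \<mu>))\<^sup>2) + (norm \<mu>)\<^sup>2"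
    using mean by (simp add: power2_norm_eq_inner)
  also have "expectation (\<lambda>\<omega>. (norm (a \<omega> - \<mu>))\<^sup>2) \<le> \<sigma>\<^sup>2"
    using var nn_integral_eq_integral[OF ints(1)] by simp
  finally show ?thesis by simp
qed

lemma (in prob_space) integrable_avg_local_update_increment:
  fixes f :: "'b::{real_inner, banach, second_countable_topology} \<Rightarrow> real"
    and x :: "nat \<Rightarrow> 'b" and x' a :: "nat \<Rightarrow> 'a \<Rightarrow> 'b"
  assumes m: "0 < m" and L: "0 \<le> L" and \<tau>: "0 \<le> \<tau>"
    and f: "continuous_on UNIV f"
    and rem: "\<And>h. \<bar>f (avg m x + h) - f (avg m x) - g \<bullet> h\<bar> \<le> L * (norm h)\<^sup>2"
    and x': "\<And>i. i < m \<Longrightarrow> x' i \<in> borel_measurable M"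
    and a_sq: "\<And>i. i < m \<Longrightarrow> integrable M (\<lambda>\<omega>. (norm (a i \<omega>))\<^sup>2)"
    and near: "\<And>i \<omega>. i < m \<Longrightarrow> norm (x' i \<omega> - (x i - \<tau> *\<^sub>R a i \<omega>)) \<le> c * norm (a i \<omega>)"
  shows "integrable M (\<lambda>\<omega>. f (avg m (\<lambda>i. x' i \<omega>)) - f (avg m x))"
proof (rule Bochner_Integration.integrable_bound)
  show "integrable M (\<lambda>\<omega>. (norm g)\<^sup>2 / 2 + (1 / 2 + L) * (\<tau> + c)\<^sup>2 * avg m (\<lambda>i. (norm (a i \<omega>))\<^sup>2))"
    using a_sq by (intro Bochner_Integration.integrable_add integrable_mult_right integrable_avg) auto
  have "(\<lambda>\<omega>. avg m (\<lambda>i. x' i \<omega>)) \<in> borel_measurable M"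
    unfolding avg_def using x' by (intro borel_measurable_scaleR borel_measurable_sum) auto
  then show "(\<lambda>\<omega>. f (avg m (\<lambda>i. x' i \<omega>)) - f (avg m x)) \<in> borel_measurable M"
    using borel_measurable_continuous_on[OF f] by measurable
  show "AE \<omega> in M. norm (f (avg m (\<lambda>i. x' i \<omega>)) - f (avg m x))
      \<le> norm ((norm g)\<^sup>2 / 2 + (1 / 2 + L) * (\<tau> + c)\<^sup>2 * avg m (\<lambda>i. (norm (a i \<omega>))\<^sup>2))"
  proof (rule AE_I2)
    fix \<omega>
    have "0 \<le> avg m (\<lambda>i. (norm (a i \<omega>))\<^sup>2)"
      by (rule avg_nonneg) simp
    then show "norm (f (avg m (\<lambda>i. x' i \<omega>)) - f (avg m x))
        \<le> norm ((norm g)\<^sup>2 / 2 + (1 / 2 + L) * (\<tau> + c)\<^sup>2 * avg m (\<lambda>i. (norm (a i \<omega>))\<^sup>2))"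
      using avg_local_update_abs_bound[OF m L \<tau> rem near] L by simp
  qed
qed

lemma (in prob_space) expected_avg_local_update_descent:
  fixes f :: "'b::{real_inner, banach, second_countable_topology} \<Rightarrow> real"
    and x :: "nat \<Rightarrow> 'b" and x' a :: "nat \<Rightarrow> 'a \<Rightarrow> 'b"
  assumes m: "0 < m" and L: "0 \<le> L" and \<tau>: "0 \<le> \<tau>" and c: "0 \<le> c"
    and f: "continuous_on UNIV f"
    and rem: "\<And>h. \<bar>f (avg m x + h) - f (avg m x) - g \<bullet> h\<bar> \<le> L * (norm h)\<^sup>2"
    and x': "\<And>i. i < m \<Longrightarrow> x' i \<in> borel_measurable M"
    and a: "\<And>i. i < m \<Longrightarrow> integrable M (a i)"
    and a_sq: "\<And>i. i < m \<Longrightarrow> integrable M (\<lambda>\<omega>. (norm (a i \<omega>))\<^sup>2)"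
    and mean: "\<And>i. i < m \<Longrightarrow> expectation (a i) = \<mu> i"
    and second: "\<And>i. i < m \<Longrightarrow> expectation (\<lambda>\<omega>. (norm (a i \<omega>))\<^sup>2) \<le> (norm (\<mu> i))\<^sup>2 + \<sigma>\<^sup>2"
    and near: "\<And>i \<omega>. i < m \<Longrightarrow> norm (x' i \<omega> - (x i - \<tau> *\<^sub>R a i \<omega>)) \<le> c * norm (a i \<omega>)"
  shows "expectation (\<lambda>\<omega>. f (avg m (\<lambda>i. x' i \<omega>)) - f (avg m x))
    \<le> c / 2 * (norm g)\<^sup>2 - \<tau> * avg m (\<lambda>i. g \<bullet> \<mu> i)
      + (c / 2 + L * (\<tau> + c)\<^sup>2) * (avg m (\<lambda>i. (norm (\<mu> i))\<^sup>2) + \<sigma>\<^sup>2)"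
proof -
  define K where "K = c / 2 + L * (\<tau> + c)\<^sup>2"
  define u where "u i \<omega> = - \<tau> * (g \<bullet> a i \<omega>) + K * (norm (a i \<omega>))\<^sup>2" for i \<omega>
  have u_int: "integrable M (u i)" if "i < m" for i
    unfolding u_def using a[OF that] a_sq[OF that] by auto
  have Eu: "expectation (u i) = - \<tau> * (g \<bullet> \<mu> i) + K * expectation (\<lambda>\<omega>. (norm (a i \<omega>))\<^sup>2)"
    if "i < m" for i
    using a[OF that] a_sq[OF that] mean[OF that] by (simp add: u_def[abs_def])
  have "f (avg m (\<lambda>i. x' i \<omega>)) - f (avg m x) \<le> c / 2 * (norm g)\<^sup>2 + avg m (\<lambda>i. u i \<omega>)" for \<omega>
    using avg_local_update_descent[OF m L \<tau> c rem near[of _ \<omega>]] by (simp add: u_def K_def)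
  moreover have "integrable M (\<lambda>\<omega>. c / 2 * (norm g)\<^sup>2 + avg m (\<lambda>i. u i \<omega>))"
    using u_int by (intro Bochner_Integration.integrable_add integrable_avg) auto
  ultimately have "expectation (\<lambda>\<omega>. f (avg m (\<lambda>i. x' i \<omega>)) - f (avg m x))
      \<le> expectation (\<lambda>\<omega>. c / 2 * (norm g)\<^sup>2 + avg m (\<lambda>i. u i \<omega>))"
    using integrable_avg_local_update_increment[OF m L \<tau> f rem x' a_sq near] by (intro integral_mono)
  also have "\<dots> = c / 2 * (norm g)\<^sup>2 + avg m (\<lambda>i. expectation (u i))"
    using u_int integrable_avg[of m M u, OF u_int] by (simp add: integral_avg prob_space)
  also have "\<dots> = c / 2 * (norm g)\<^sup>2 + avg m (\<lambda>i. - \<tau> * (g \<bullet> \<mu> i) + K * expectation (\<lambda>\<omega>. (norm (a i \<omega>))\<^sup>2))"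
    using Eu by (simp cong: avg_cong)
  also have "\<dots> \<le> c / 2 * (norm g)\<^sup>2 + avg m (\<lambda>i. - \<tau> * (g \<bullet> \<mu> i) + K * ((norm (\<mu> i))\<^sup>2 + \<sigma>\<^sup>2))"
    using second L c by (intro add_left_mono avg_mono mult_left_mono) (auto simp: K_def)
  also have "\<dots> = c / 2 * (norm g)\<^sup>2 - \<tau> * avg m (\<lambda>i. g \<bullet> \<mu> i) + K * (avg m (\<lambda>i. (norm (\<mu> i))\<^sup>2) + \<sigma>\<^sup>2)"
    by (simp add: avg_add avg_diff avg_mult_left avg_const m)
  finally show ?thesis
    by (simp add: K_def)
qed

lemma (in prob_space) local_sgd_round_expected_descent:
  fixes f :: "'b::{real_inner, banach, second_countable_topology} \<Rightarrow> real"
    and gl :: "nat \<Rightarrow> 'b \<Rightarrow> 's \<Rightarrow> 'b" and \<xi> :: "nat \<Rightarrow> 'a \<Rightarrow> 's"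
  assumes m: "0 < m" and L: "0 \<le> L" and \<eta>: "0 \<le> \<eta>" and small: "2 * \<eta> * L * real s \<le> 1"
    and c: "c = 2 * \<eta>\<^sup>2 * L * (real s)\<^sup>2"
    and f: "continuous_on UNIV f"
    and rem: "\<And>h. \<bar>f (avg m x + h) - f (avg m x) - g \<bullet> h\<bar> \<le> L * (norm h)\<^sup>2"
    and \<xi>: "\<And>i. i < m \<Longrightarrow> \<xi> i \<in> M \<rightarrow>\<^sub>M S"
    and gl_meas: "\<And>i. i < m \<Longrightarrow> (\<lambda>p. gl i (fst p) (snd p)) \<in> borel_measurable (borel \<Otimes>\<^sub>M S)"
    and lip: "\<And>i y y' z. i < m \<Longrightarrow> norm (gl i y z - gl i y' z) \<le> L * norm (y - y')"
    and unbiased: "\<And>i. i < m \<Longrightarrow> expectation (\<lambda>\<omega>. gl i (x i) (\<xi> i \<omega>)) = \<mu> i"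
    and var: "\<And>i. i < m \<Longrightarrow> (\<integral>\<^sup>+\<omega>. ennreal ((norm (gl i (x i) (\<xi> i \<omega>) - \<mu> i))\<^sup>2) \<partial>M) \<le> ennreal (\<sigma>\<^sup>2)"
  shows "expectation (\<lambda>\<omega>. f (avg m (\<lambda>i. local_steps gl \<eta> i (\<xi> i \<omega>) s (x i))) - f (avg m x))
    \<le> c / 2 * (norm g)\<^sup>2 - \<eta> * real s * avg m (\<lambda>i. g \<bullet> \<mu> i)
      + (c / 2 + L * (\<eta> * real s + c)\<^sup>2) * (avg m (\<lambda>i. (norm (\<mu> i))\<^sup>2) + \<sigma>\<^sup>2)"
proof (rule expected_avg_local_update_descent[OF m L _ _ f rem])
  define a where "a i \<omega> = gl i (x i) (\<xi> i \<omega>)" for i \<omega>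
  have a_meas: "a i \<in> borel_measurable M" if "i < m" for i
    unfolding a_def[abs_def] using \<xi> gl_meas that
    by (intro measurable_sample_gradient[where G = "gl i" and y = "\<lambda>_. x i"]) auto
  show "integrable M (a i)" "integrable M (\<lambda>\<omega>. (norm (a i \<omega>))\<^sup>2)" if "i < m" for i
    using square_integrable_of_variance_bound[OF a_meas[OF that]] var[OF that] by (auto simp: a_def)
  show "expectation (\<lambda>\<omega>. (norm (a i \<omega>))\<^sup>2) \<le> (norm (\<mu> i))\<^sup>2 + \<sigma>\<^sup>2" if "i < m" for i
    using second_moment_le_of_variance_bound[OF a_meas[OF that]] var[OF that] unbiased[OF that]
    by (simp add: a_def[abs_def])
  show "expectation (a i) = \<mu> i" if "i < m" for i
    using unbiased[OF that] by (simp add: a_def[abs_def])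
  show "(\<lambda>\<omega>. local_steps gl \<eta> i (\<xi> i \<omega>) s (x i)) \<in> borel_measurable M" if "i < m" for i
    using \<xi> gl_meas that by (auto intro: measurable_local_steps)
  show "norm (local_steps gl \<eta> i (\<xi> i \<omega>) s (x i) - (x i - (\<eta> * real s) *\<^sub>R a i \<omega>)) \<le> c * norm (a i \<omega>)"
    if "i < m" for i \<omega>
    using gradient_steps_bounds[where G = "\<lambda>v. gl i v (\<xi> i \<omega>)", OF lip[OF that] L \<eta> small]
    by (simp add: local_steps_def a_def c mult_ac)
qed (use \<eta> c L in auto)

section \<open>Client heterogeneity and the step size\<close>

lemma avg_inner_perturbed_ge:
  fixes v \<mu> :: "nat \<Rightarrow> 'a::real_inner"
  assumes m: "0 < m" and near: "\<And>i. i < m \<Longrightarrow> norm (\<mu> i - v i) \<le> e i"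
  shows "(norm (avg m v))\<^sup>2 / 2 - avg m (\<lambda>i. (e i)\<^sup>2) / 2 \<le> avg m (\<lambda>i. avg m v \<bullet> \<mu> i)"
proof -
  let ?g = "avg m v"
  have "?g \<bullet> v i - ((norm ?g)\<^sup>2 + (e i)\<^sup>2) / 2 \<le> ?g \<bullet> \<mu> i" if "i < m" for i
  proof -
    have "- (?g \<bullet> (\<mu> i - v i)) \<le> norm ?g * e i"
      using Cauchy_Schwarz_ineq2[of ?g "\<mu> i - v i"] mult_left_mono[OF near[OF that] norm_ge_zero[of ?g]]
      by linarith
    also have "\<dots> \<le> ((norm ?g)\<^sup>2 + (e i)\<^sup>2) / 2"
      using sum_squares_bound[of "norm ?g" "e i"] by simp
    finally show ?thesis
      by (simp add: inner_diff_right field_simps)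
  qed
  then have "avg m (\<lambda>i. ?g \<bullet> v i - ((norm ?g)\<^sup>2 + (e i)\<^sup>2) / 2) \<le> avg m (\<lambda>i. ?g \<bullet> \<mu> i)"
    by (rule avg_mono)
  then show ?thesis
    by (simp add: avg_diff add_divide_distrib avg_add avg_const m avg_divide
        flip: inner_avg_right power2_norm_eq_inner)
qed

lemma avg_norm_sq_perturbed_le:
  fixes v \<mu> :: "nat \<Rightarrow> 'a::real_inner"
  assumes m: "0 < m" and near: "\<And>i. i < m \<Longrightarrow> norm (\<mu> i - v i) \<le> e i"
  shows "avg m (\<lambda>i. (norm (\<mu> i))\<^sup>2)
    \<le> 2 * ((norm (avg m v))\<^sup>2 + avg m (\<lambda>i. (norm (v i - avg m v))\<^sup>2)) + 2 * avg m (\<lambda>i. (e i)\<^sup>2)"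
proof -
  have "(norm (\<mu> i))\<^sup>2 \<le> 2 * (norm (v i))\<^sup>2 + 2 * (e i)\<^sup>2" if "i < m" for i
  proof -
    have "norm (\<mu> i) \<le> norm (v i) + e i"
      using norm_triangle_ineq[of "\<mu> i - v i" "v i"] near[OF that] by simp
    then have "(norm (\<mu> i))\<^sup>2 \<le> (norm (v i) + e i)\<^sup>2"
      by (rule power_mono) simp
    also have "\<dots> \<le> 2 * (norm (v i))\<^sup>2 + 2 * (e i)\<^sup>2"
      using sum_squares_bound[of "norm (v i)" "e i"] by (simp add: power2_sum)
    finally show ?thesis .
  qed
  then have "avg m (\<lambda>i. (norm (\<mu> i))\<^sup>2) \<le> avg m (\<lambda>i. 2 * (norm (v i))\<^sup>2 + 2 * (e i)\<^sup>2)"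
    by (rule avg_mono)
  also have "\<dots> = 2 * avg m (\<lambda>i. (norm (v i))\<^sup>2) + 2 * avg m (\<lambda>i. (e i)\<^sup>2)"
    by (simp add: avg_add avg_mult_left)
  also have "\<dots> = 2 * ((norm (avg m v))\<^sup>2 + avg m (\<lambda>i. (norm (v i - avg m v))\<^sup>2)) + 2 * avg m (\<lambda>i. (e i)\<^sup>2)"
    by (subst avg_norm_sq_bias_variance[OF m, of v]) (rule refl)
  finally show ?thesis .
qed

lemma step_size_product_small:
  fixes \<eta> L s \<beta> \<kappa> :: real
  assumes \<eta>: "0 < \<eta>" and L: "1 \<le> L" and s: "1 \<le> s"
    and \<eta>_le: "\<eta> \<le> 1 / (108 * L\<^sup>2 * s ^ 3 * (\<beta>\<^sup>2 + 1) * (1 + \<kappa>\<^sup>2 * L\<^sup>2))"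
  shows "108 * (\<eta> * L * s) * (\<beta>\<^sup>2 + 1) \<le> 1"
proof -
  define r where "r = L * s\<^sup>2 * (1 + \<kappa>\<^sup>2 * L\<^sup>2)"
  have "1 * 1 \<le> L * s\<^sup>2"
    using L s by (intro mult_mono) auto
  then have r: "1 \<le> r"
    unfolding r_def using mult_mono[of 1 "L * s\<^sup>2" 1 "1 + \<kappa>\<^sup>2 * L\<^sup>2"] by simp
  have D: "108 * L\<^sup>2 * s ^ 3 * (\<beta>\<^sup>2 + 1) * (1 + \<kappa>\<^sup>2 * L\<^sup>2) = 108 * (L * s) * (\<beta>\<^sup>2 + 1) * r"
    by (simp add: r_def power2_eq_square power3_eq_cube)
  have "0 < 108 * (L * s) * (\<beta>\<^sup>2 + 1) * r"
    using L s r by (intro mult_pos_pos) (auto intro: add_nonneg_pos)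
  then have "\<eta> * (108 * (L * s) * (\<beta>\<^sup>2 + 1) * r) \<le> 1"
    using \<eta>_le unfolding D by (simp add: le_divide_eq mult.commute)
  moreover have "\<eta> * (108 * (L * s) * (\<beta>\<^sup>2 + 1)) * 1 \<le> \<eta> * (108 * (L * s) * (\<beta>\<^sup>2 + 1)) * r"
    using r \<eta> L s by (intro mult_left_mono) auto
  ultimately show ?thesis
    by (simp add: mult_ac)
qed

lemma local_step_size_small:
  fixes \<eta> L s \<beta> :: real
  assumes "0 \<le> \<eta> * L * s" and "108 * (\<eta> * L * s) * (\<beta>\<^sup>2 + 1) \<le> 1"
  shows "2 * \<eta> * L * s \<le> 1"
proof -
  have "\<eta> * L * s * 1 \<le> \<eta> * L * s * (\<beta>\<^sup>2 + 1)"
    using assms(1) by (intro mult_left_mono) auto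
  with assms(2) show ?thesis
    by simp
qed

lemma local_update_constant_le:
  fixes \<eta> L s c :: real
  assumes \<eta>: "0 \<le> \<eta>" and L: "0 \<le> L" and s: "0 \<le> s" and d: "\<eta> * L * s \<le> 1 / 108"
    and c: "c = 2 * \<eta>\<^sup>2 * L * s\<^sup>2"
  shows "c / 2 + L * (\<eta> * s + c)\<^sup>2 \<le> 21 / 10 * ((\<eta> * s) * (\<eta> * L * s))"
proof -
  have "(1 + 2 * (\<eta> * L * s))\<^sup>2 \<le> (1 + 2 / 108)\<^sup>2"
    using \<eta> L s d by (intro power_mono) auto
  then have "1 + (1 + 2 * (\<eta> * L * s))\<^sup>2 \<le> 21 / 10"
    by (simp add: power2_eq_square)
  then have "(\<eta> * s) * (\<eta> * L * s) * (1 + (1 + 2 * (\<eta> * L * s))\<^sup>2) \<le> (\<eta> * s) * (\<eta> * L * s) * (21 / 10)"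
    using \<eta> L s by (intro mult_left_mono) auto
  moreover have "c / 2 + L * (\<eta> * s + c)\<^sup>2 = (\<eta> * s) * (\<eta> * L * s) * (1 + (1 + 2 * (\<eta> * L * s))\<^sup>2)"
    by (simp add: c power2_eq_square algebra_simps)
  ultimately show ?thesis
    by (simp add: mult.commute)
qed

lemma descent_coefficients_le:
  fixes \<tau> d K \<beta> \<zeta> \<sigma> k G P :: real
  assumes \<tau>: "0 \<le> \<tau>" and d\<beta>: "d * (\<beta>\<^sup>2 + 1) \<le> 1 / 108" and d: "d \<le> 1 / 108"
    and K0: "0 \<le> K" and K: "K \<le> 21 / 10 * (\<tau> * d)"
    and G: "0 \<le> G" and P: "0 \<le> P" and k: "1 \<le> k"
  shows "\<tau> * G * (d - 1 / 2) + K * (2 * (1 + \<beta>\<^sup>2)) * G + (\<tau> / 2 + 2 * K) * P + K * (2 * \<zeta>\<^sup>2 + \<sigma>\<^sup>2)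
    \<le> - (\<tau> / 3) * G + \<tau> * P + 6 * (\<tau> * d) * (\<zeta>\<^sup>2 + \<sigma>\<^sup>2) * k"
proof -
  have "K * (2 * (1 + \<beta>\<^sup>2)) \<le> 21 / 5 * \<tau> * (d * (\<beta>\<^sup>2 + 1))"
    using mult_right_mono[OF K, of "2 * (1 + \<beta>\<^sup>2)"] by (simp add: algebra_simps)
  also have "\<dots> \<le> 21 / 5 * \<tau> / 108"
    using mult_left_mono[OF d\<beta>, of "21 / 5 * \<tau>"] \<tau> by simp
  finally have "\<tau> * (d - 1 / 2) + K * (2 * (1 + \<beta>\<^sup>2)) \<le> - (\<tau> / 3)"
    using mult_left_mono[OF d \<tau>] \<tau> by (simp add: right_diff_distrib)
  then have "(\<tau> * (d - 1 / 2) + K * (2 * (1 + \<beta>\<^sup>2))) * G \<le> - (\<tau> / 3) * G"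
    using G by (rule mult_right_mono)
  then have 1: "\<tau> * G * (d - 1 / 2) + K * (2 * (1 + \<beta>\<^sup>2)) * G \<le> - (\<tau> / 3) * G"
    by (simp add: algebra_simps)
  have "\<tau> / 2 + 2 * K \<le> \<tau>"
    using K mult_left_mono[OF d \<tau>] \<tau> by simp
  then have 2: "(\<tau> / 2 + 2 * K) * P \<le> \<tau> * P"
    using P by (rule mult_right_mono)
  have "0 \<le> \<tau> * d * (\<zeta>\<^sup>2 + \<sigma>\<^sup>2)"
    using K0 K by simp
  have "K * (2 * \<zeta>\<^sup>2 + \<sigma>\<^sup>2) \<le> 21 / 10 * (\<tau> * d) * (2 * (\<zeta>\<^sup>2 + \<sigma>\<^sup>2))"
    using K K0 by (intro mult_mono) auto
  also have "\<dots> = 21 / 5 * (\<tau> * d * (\<zeta>\<^sup>2 + \<sigma>\<^sup>2)) * 1"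
    by simp
  also have "\<dots> \<le> 6 * (\<tau> * d * (\<zeta>\<^sup>2 + \<sigma>\<^sup>2)) * k"
    by (rule mult_mono) (use k \<open>0 \<le> \<tau> * d * (\<zeta>\<^sup>2 + \<sigma>\<^sup>2)\<close> in linarith)+
  finally have 3: "K * (2 * \<zeta>\<^sup>2 + \<sigma>\<^sup>2) \<le> 6 * (\<tau> * d) * (\<zeta>\<^sup>2 + \<sigma>\<^sup>2) * k"
    by (simp add: mult.assoc)
  from 1 2 3 show ?thesis
    by linarith
qed

lemma descent_bound_arith:
  fixes \<eta> L s \<beta> \<zeta> \<sigma> k G \<Delta> X1 X2 c :: real
  assumes \<eta>: "0 \<le> \<eta>" and L: "0 \<le> L" and s: "0 \<le> s"
    and small: "108 * (\<eta> * L * s) * (\<beta>\<^sup>2 + 1) \<le> 1"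
    and G: "0 \<le> G" and \<Delta>: "0 \<le> \<Delta>" and k: "1 \<le> k"
    and X1: "G / 2 - L\<^sup>2 * \<Delta> / 2 \<le> X1"
    and X2: "X2 \<le> 2 * (G + (\<beta>\<^sup>2 * G + \<zeta>\<^sup>2)) + 2 * (L\<^sup>2 * \<Delta>)"
    and c: "c = 2 * \<eta>\<^sup>2 * L * s\<^sup>2"
  shows "c / 2 * G - \<eta> * s * X1 + (c / 2 + L * (\<eta> * s + c)\<^sup>2) * (X2 + \<sigma>\<^sup>2)
    \<le> - (\<eta> * s / 3) * G + \<eta> * s * L\<^sup>2 * \<Delta> + 6 * \<eta>\<^sup>2 * s\<^sup>2 * L * (\<zeta>\<^sup>2 + \<sigma>\<^sup>2) * k"
proof -
  define \<tau> where "\<tau> = \<eta> * s"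
  define d where "d = \<eta> * L * s"
  define K where "K = c / 2 + L * (\<eta> * s + c)\<^sup>2"
  have \<tau>: "0 \<le> \<tau>" and K0: "0 \<le> K"
    using \<eta> L s by (simp_all add: \<tau>_def K_def c)
  have d\<beta>: "d * (\<beta>\<^sup>2 + 1) \<le> 1 / 108"
    using small by (simp add: d_def)
  moreover have "d * 1 \<le> d * (\<beta>\<^sup>2 + 1)"
    using \<eta> L s by (intro mult_left_mono) (auto simp: d_def)
  ultimately have d: "d \<le> 1 / 108"
    by simp
  have K: "K \<le> 21 / 10 * (\<tau> * d)"
    using local_update_constant_le[OF \<eta> L s _ c] d by (simp add: K_def \<tau>_def d_def)
  have "c / 2 * G = \<tau> * d * G"
    by (simp add: c \<tau>_def d_def power2_eq_square)
  moreover have "- (\<tau> * X1) \<le> - (\<tau> * (G / 2 - L\<^sup>2 * \<Delta> / 2))"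
    using mult_left_mono[OF X1 \<tau>] by simp
  moreover have "K * (X2 + \<sigma>\<^sup>2) \<le> K * (2 * (1 + \<beta>\<^sup>2) * G + 2 * \<zeta>\<^sup>2 + 2 * L\<^sup>2 * \<Delta> + \<sigma>\<^sup>2)"
    using X2 K0 by (intro mult_left_mono) (auto simp: algebra_simps)
  ultimately have "c / 2 * G - \<tau> * X1 + K * (X2 + \<sigma>\<^sup>2)
      \<le> \<tau> * d * G - \<tau> * (G / 2 - L\<^sup>2 * \<Delta> / 2) + K * (2 * (1 + \<beta>\<^sup>2) * G + 2 * \<zeta>\<^sup>2 + 2 * L\<^sup>2 * \<Delta> + \<sigma>\<^sup>2)"
    by linarith
  also have "\<dots> = \<tau> * G * (d - 1 / 2) + K * (2 * (1 + \<beta>\<^sup>2)) * G + (\<tau> / 2 + 2 * K) * (L\<^sup>2 * \<Delta>)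
      + K * (2 * \<zeta>\<^sup>2 + \<sigma>\<^sup>2)"
    by (simp add: algebra_simps)
  also have "\<dots> \<le> - (\<tau> / 3) * G + \<tau> * (L\<^sup>2 * \<Delta>) + 6 * (\<tau> * d) * (\<zeta>\<^sup>2 + \<sigma>\<^sup>2) * k"
    using \<Delta> by (intro descent_coefficients_le[OF \<tau> d\<beta> d K0 K G _ k]) simp
  also have "\<dots> = - (\<eta> * s / 3) * G + \<eta> * s * L\<^sup>2 * \<Delta> + 6 * \<eta>\<^sup>2 * s\<^sup>2 * L * (\<zeta>\<^sup>2 + \<sigma>\<^sup>2) * k"
    by (simp add: \<tau>_def d_def power2_eq_square mult_ac)
  finally show ?thesis
    by (simp add: K_def \<tau>_def)
qed

lemma heterogeneous_descent_bound:
  fixes x :: "nat \<Rightarrow> 'a::real_inner" and gF :: "nat \<Rightarrow> 'a \<Rightarrow> 'a"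
  assumes m: "0 < m" and \<eta>: "0 \<le> \<eta>" and L: "0 \<le> L" and s: "0 \<le> s" and k: "1 \<le> k"
    and small: "108 * (\<eta> * L * s) * (\<beta>\<^sup>2 + 1) \<le> 1"
    and c: "c = 2 * \<eta>\<^sup>2 * L * s\<^sup>2"
    and g: "g = avg m (\<lambda>i. gF i (avg m x))"
    and lip: "\<And>i. i < m \<Longrightarrow> norm (gF i (x i) - gF i (avg m x)) \<le> L * norm (x i - avg m x)"
    and hetero: "avg m (\<lambda>i. (norm (gF i (avg m x) - g))\<^sup>2) \<le> \<beta>\<^sup>2 * (norm g)\<^sup>2 + \<zeta>\<^sup>2"
  shows "c / 2 * (norm g)\<^sup>2 - \<eta> * s * avg m (\<lambda>i. g \<bullet> gF i (x i))
      + (c / 2 + L * (\<eta> * s + c)\<^sup>2) * (avg m (\<lambda>i. (norm (gF i (x i)))\<^sup>2) + \<sigma>\<^sup>2)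
    \<le> - (\<eta> * s / 3) * (norm g)\<^sup>2 + \<eta> * s * L\<^sup>2 * avg m (\<lambda>i. (norm (x i - avg m x))\<^sup>2)
      + 6 * \<eta>\<^sup>2 * s\<^sup>2 * L * (\<zeta>\<^sup>2 + \<sigma>\<^sup>2) * k"
proof (rule descent_bound_arith[OF \<eta> L s small _ _ k _ _ c])
  define e where "e i = L * norm (x i - avg m x)" for i
  have e: "\<And>i. i < m \<Longrightarrow> norm (gF i (x i) - gF i (avg m x)) \<le> e i"
    using lip by (simp add: e_def)
  have avg_e: "avg m (\<lambda>i. (e i)\<^sup>2) = L\<^sup>2 * avg m (\<lambda>i. (norm (x i - avg m x))\<^sup>2)"
    by (simp add: e_def power_mult_distrib avg_mult_left)
  show "(norm g)\<^sup>2 / 2 - L\<^sup>2 * avg m (\<lambda>i. (norm (x i - avg m x))\<^sup>2) / 2 \<le> avg m (\<lambda>i. g \<bullet> gF i (x i))"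
    using avg_inner_perturbed_ge[of m "\<lambda>i. gF i (x i)" "\<lambda>i. gF i (avg m x)" e, OF m e] unfolding avg_e g by simp
  show "avg m (\<lambda>i. (norm (gF i (x i)))\<^sup>2)
      \<le> 2 * ((norm g)\<^sup>2 + (\<beta>\<^sup>2 * (norm g)\<^sup>2 + \<zeta>\<^sup>2)) + 2 * (L\<^sup>2 * avg m (\<lambda>i. (norm (x i - avg m x))\<^sup>2))"
    using avg_norm_sq_perturbed_le[of m "\<lambda>i. gF i (x i)" "\<lambda>i. gF i (avg m x)" e, OF m e] hetero unfolding avg_e g[symmetric] by simp
qed (auto intro: avg_nonneg)

theorem lemma2:
  fixes M :: "'w measure" and S :: "'s measure"
    and D :: "nat \<Rightarrow> 's measure"
    and l :: "nat \<Rightarrow> 'a::euclidean_space \<Rightarrow> 's \<Rightarrow> real"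
    and gl :: "nat \<Rightarrow> 'a \<Rightarrow> 's \<Rightarrow> 'a"
    and gF :: "nat \<Rightarrow> 'a \<Rightarrow> 'a"
    and Li :: "nat \<Rightarrow> real"
    and m s :: nat and \<eta> L \<beta> \<zeta> \<sigma> c :: real
    and xi :: "nat \<Rightarrow> 'w \<Rightarrow> 's"
    and A :: "'w \<Rightarrow> nat set"
    and x :: "nat \<Rightarrow> 'a" and xsrv :: 'a
  assumes m_pos: "0 < m"
    and s_ge: "1 \<le> s"
    and eta_pos: "0 < \<eta>"
    and M_prob: "prob_space M"
    and D_prob: "\<forall>i<m. prob_space (D i)"
    and l_integrable: "\<forall>i<m. \<forall>y. integrable (D i) (\<lambda>z. l i y z)"
    and l_grad: "\<forall>i<m. \<forall>z y. ((\<lambda>v. l i v z) has_derivative (\<lambda>h. gl i y z \<bullet> h)) (at y)"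
    and F_grad: "\<forall>i<m. \<forall>y. (local_obj D l i has_derivative (\<lambda>h. gF i y \<bullet> h)) (at y)"
    and A1: "\<forall>i<m. \<forall>z y y'. norm (gl i y z - gl i y' z) \<le> Li i * norm (y - y')"
    and L_def: "L = Max (Li ` {..<m})"
    and L_ge: "1 \<le> L"
    and xi_meas: "\<forall>i<m. xi i \<in> M \<rightarrow>\<^sub>M S"
    and gl_meas: "\<forall>i<m. (\<lambda>p. gl i (fst p) (snd p)) \<in> borel_measurable (borel \<Otimes>\<^sub>M S)"
    and A2_unbiased: "\<forall>i<m. (\<integral>\<omega>. gl i (x i) (xi i \<omega>) \<partial>M) = gF i (x i)"
    and A2_var: "\<forall>i<m. \<forall>y. (\<integral>\<^sup>+\<omega>. ennreal ((norm (gl i y (xi i \<omega>) - gF i y))\<^sup>2) \<partial>M) \<le> ennreal (\<sigma>\<^sup>2)"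
    and beta_nn: "0 \<le> \<beta>" and zeta_nn: "0 \<le> \<zeta>"
    and A4: "\<forall>y. (1 / real m) * (\<Sum>i<m. (norm (gF i y - global_grad m gF y))\<^sup>2)
                 \<le> \<beta>\<^sup>2 * (norm (global_grad m gF y))\<^sup>2 + \<zeta>\<^sup>2"
    and A_sub: "\<forall>\<omega>. A \<omega> \<subseteq> {..<m}"
    and c_pos: "0 < c"
    and A_prob: "\<forall>i<m. {\<omega> \<in> space M. i \<in> A \<omega>} \<in> sets M \<and> c \<le> measure M {\<omega> \<in> space M. i \<in> A \<omega>}"
    and eta_le: "\<eta> \<le> 1 / (108 * L\<^sup>2 * real s ^ 3 * (\<beta>\<^sup>2 + 1) * (1 + (kappa m Li \<eta> s)\<^sup>2 * L\<^sup>2))"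
  shows "(\<integral>\<omega>. global_obj m D l
             (avg m (client_update xsrv (A \<omega>) (\<lambda>i. local_steps gl \<eta> i (xi i \<omega>) s (x i))))
           - global_obj m D l (avg m x) \<partial>M)
         \<le> - (\<eta> * real s / 3) * (norm (global_grad m gF (avg m x)))\<^sup>2
           + \<eta> * real s * (L\<^sup>2 / real m) * (\<Sum>i<m. (norm (x i - avg m x))\<^sup>2)
           + 6 * \<eta>\<^sup>2 * (real s)\<^sup>2 * L * (\<zeta>\<^sup>2 + \<sigma>\<^sup>2) * (1 + (kappa m Li \<eta> s)\<^sup>2 * L\<^sup>2)"
proof -
  interpret prob_space M by (rule M_prob)
  define g where "g = global_grad m gF (avg m x)"
  have L0: "0 \<le> L" using L_ge by simp
  have lip: "norm (gl i y z - gl i y' z) \<le> L * norm (y - y')" if "i < m" for i y y' z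
  proof -
    have "Li i \<le> L"
      unfolding L_def using that by (intro Max_ge) auto
    then have "Li i * norm (y - y') \<le> L * norm (y - y')"
      by (rule mult_right_mono) simp
    with A1 that show ?thesis
      by (meson order_trans)
  qed
  have gF_lip: "norm (gF i y - gF i y') \<le> L * norm (y - y')" if "i < m" for i y y'
    by (rule lipschitz_gradient_local_obj[where l = l and gl = gl])
      (use D_prob l_integrable l_grad lip F_grad that in auto)
  have small: "108 * (\<eta> * L * real s) * (\<beta>\<^sup>2 + 1) \<le> 1"
    using eta_pos L_ge s_ge eta_le by (intro step_size_product_small) auto
  have "(global_obj m D l has_derivative (\<lambda>h. global_grad m gF y \<bullet> h)) (at y)" for y
    using F_grad by (intro has_derivative_global_obj) auto
  then have F_cont: "continuous_on UNIV (global_obj m D l)"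
    by (rule has_derivative_continuous_on)
  have F_rem: "\<bar>global_obj m D l (avg m x + h) - global_obj m D l (avg m x) - g \<bullet> h\<bar> \<le> L * (norm h)\<^sup>2" for h
    unfolding g_def using m_pos F_grad gF_lip by (intro global_obj_taylor_bound) auto
  define \<gamma> where "\<gamma> = 2 * \<eta>\<^sup>2 * L * (real s)\<^sup>2"
  have "(\<integral>\<omega>. global_obj m D l (avg m (\<lambda>i. local_steps gl \<eta> i (xi i \<omega>) s (x i))) - global_obj m D l (avg m x) \<partial>M)
      \<le> \<gamma> / 2 * (norm g)\<^sup>2 - \<eta> * real s * avg m (\<lambda>i. g \<bullet> gF i (x i))
        + (\<gamma> / 2 + L * (\<eta> * real s + \<gamma>)\<^sup>2) * (avg m (\<lambda>i. (norm (gF i (x i)))\<^sup>2) + \<sigma>\<^sup>2)"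
    by (rule local_sgd_round_expected_descent[OF m_pos L0 _ local_step_size_small[OF _ small] \<gamma>_def F_cont F_rem])
      (use eta_pos L0 xi_meas gl_meas lip A2_unbiased A2_var in auto)
  also have "\<dots> \<le> - (\<eta> * real s / 3) * (norm g)\<^sup>2 + \<eta> * real s * L\<^sup>2 * avg m (\<lambda>i. (norm (x i - avg m x))\<^sup>2)
      + 6 * \<eta>\<^sup>2 * (real s)\<^sup>2 * L * (\<zeta>\<^sup>2 + \<sigma>\<^sup>2) * (1 + (kappa m Li \<eta> s)\<^sup>2 * L\<^sup>2)"
    by (rule heterogeneous_descent_bound[OF m_pos _ L0 _ _ small \<gamma>_def])
      (use eta_pos gF_lip A4 in \<open>auto simp: g_def global_grad_eq_avg avg_def\<close>)
  finally show ?thesis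
    using A_sub by (simp add: avg_client_update g_def avg_def[of m "\<lambda>i. (norm (x i - avg m x))\<^sup>2"])
qed

end
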